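(* Let $n\geq 2$ and $q=p^h>2$ with $p$ prime, and put $N=h(n-1)$. Let $B$ be a minimal blocking set with respect to lines in $PG(n,q)$. Suppose there are $p^N-p^{N-1}+1$ distinct points $R_i\in B$ such that every line through $R_i$ either meets $B$ only in $R_i$ or is entirely contained in $B$. Then $B$ is a hyperplane of $PG(n,q)$.
   Context: A blocking set with respect to lines is a set of points meeting every line. It is minimal if no proper subset is a blocking set. *)

theory Defs
  imports "HOL-Computational_Algebra.Primes"
begin

text \<open>Vectors of F^(n+1) are functions nat => F vanishing outside {..n}.
  A point is a 1-dimensional subspace, represented as its set of vectors.\<close>

definition pg_vecs :: "nat \<Rightarrow> (nat \<Rightarrow> 'a::field) set" where
  "pg_vecs n = {v. \<forall>i>n. v i = 0}"

definition pg_span1 :: "(nat \<Rightarrow> 'a::field) \<Rightarrow> (nat \<Rightarrow> 'a) set" where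
  "pg_span1 v = {(\<lambda>i. c * v i) | c. True}"

definition pg_span2 :: "(nat \<Rightarrow> 'a::field) \<Rightarrow> (nat \<Rightarrow> 'a) \<Rightarrow> (nat \<Rightarrow> 'a) set" where
  "pg_span2 u w = {(\<lambda>i. a * u i + b * w i) | a b. True}"

definition pg_points :: "nat \<Rightarrow> (nat \<Rightarrow> 'a::field) set set" where
  "pg_points n = {pg_span1 v | v. v \<in> pg_vecs n \<and> v \<noteq> (\<lambda>_. 0)}"

definition pg_lines :: "nat \<Rightarrow> (nat \<Rightarrow> 'a::field) set set set" where
  "pg_lines n = {{P \<in> pg_points n. P \<subseteq> pg_span2 u w} | u w.
      u \<in> pg_vecs n \<and> w \<in> pg_vecs n \<and> pg_span1 u \<noteq> pg_span1 w \<and> u \<noteq> (\<lambda>_. 0) \<and> w \<noteq> (\<lambda>_. 0)}"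

definition pg_hyperplanes :: "nat \<Rightarrow> (nat \<Rightarrow> 'a::field) set set set" where
  "pg_hyperplanes n = {{P \<in> pg_points n. P \<subseteq> {v. (\<Sum>i\<le>n. c i * v i) = 0}} | c.
      (\<exists>i\<le>n. c i \<noteq> 0)}"

definition blocking_set :: "nat \<Rightarrow> (nat \<Rightarrow> 'a::field) set set \<Rightarrow> bool" where
  "blocking_set n B \<longleftrightarrow> B \<subseteq> pg_points n \<and> (\<forall>L \<in> pg_lines n. L \<inter> B \<noteq> {})"

definition minimal_blocking_set :: "nat \<Rightarrow> (nat \<Rightarrow> 'a::field) set set \<Rightarrow> bool" where
  "minimal_blocking_set n B \<longleftrightarrow> blocking_set n B \<and> (\<forall>B'. B' \<subset> B \<longrightarrow> \<not> blocking_set n B')"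

end

theory Submission
  imports Defs "HOL-Library.FuncSet"
begin

(* Let C (pg_cone) be the set of vectors spanning points of B,
   together with 0, and W (pg_vertex_space) the set of "vertex" vectors u in C
   such that every linear combination of u with a vector of C again lies in C.
   W is a linear subspace of F^(n+1), and every point r with the stated property
   (each line through r meets B only in r or lies in B) consists of vectors of W.
   Distinct points share only the zero vector, so W contains at least
   (p^N - p^(N-1) + 1)(q - 1) + 1 > q^(n-1) vectors.  A subspace that large has
   codimension at most one, hence contains the kernel of a nonzero linear form,
   i.e. all vectors of a hyperplane H.  Then H is contained in B, and since
   hyperplanes block every line, minimality of B forces H = B. *)

lemma span1_mem: "x \<in> pg_span1 v \<longleftrightarrow> (\<exists>c. x = (\<lambda>i. c * v i))"
  by (auto simp: pg_span1_def)

lemma span1_self: "v \<in> pg_span1 v"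
  unfolding span1_mem by (intro exI[of _ 1]) simp

lemma span1_zero: "(\<lambda>_. 0) \<in> pg_span1 v"
  unfolding span1_mem by (intro exI[of _ 0]) simp

lemma span1_scale:
  fixes v :: "nat \<Rightarrow> 'a::field"
  assumes "c \<noteq> 0"
  shows "pg_span1 (\<lambda>i. c * v i) = pg_span1 v"
proof -
  have "(\<lambda>i. d * (c * v i)) = (\<lambda>i. (d * c) * v i)" for d
    by (simp add: mult.assoc)
  moreover have "(\<lambda>i. d * v i) = (\<lambda>i. (d / c) * (c * v i))" for d
    using assms by simp
  ultimately show ?thesis
    unfolding pg_span1_def by blast
qed

lemma span1_eq:
  fixes u :: "nat \<Rightarrow> 'a::field"
  assumes "x \<in> pg_span1 u" and "x \<noteq> (\<lambda>_. 0)"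
  shows "pg_span1 x = pg_span1 u"
proof -
  obtain c where c: "x = (\<lambda>i. c * u i)"
    using assms(1) unfolding span1_mem by blast
  with assms(2) have "c \<noteq> 0" by auto
  with c show ?thesis by (simp add: span1_scale)
qed

lemma card_span1:
  fixes v :: "nat \<Rightarrow> 'a::{field,finite}"
  assumes "v \<noteq> (\<lambda>_. 0)"
  shows "card (pg_span1 v) = card (UNIV :: 'a set)"
proof -
  obtain k where k: "v k \<noteq> 0" using assms by auto
  have eq: "pg_span1 v = range (\<lambda>c i. c * v i)" by (auto simp: pg_span1_def)
  have "inj (\<lambda>c i. c * v i)"
  proof (rule injI)
    fix c d assume "(\<lambda>i. c * v i) = (\<lambda>i. d * v i)"
    then have "c * v k = d * v k" by metis
    with k show "c = d" by simp
  qed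
  then show ?thesis unfolding eq by (simp add: card_image)
qed

lemma span1_point: "v \<in> pg_vecs n \<Longrightarrow> v \<noteq> (\<lambda>_. 0) \<Longrightarrow> pg_span1 v \<in> pg_points n"
  unfolding pg_points_def by blast

lemma pg_vecs_lincomb:
  "u \<in> pg_vecs n \<Longrightarrow> w \<in> pg_vecs n \<Longrightarrow> (\<lambda>i. a * u i + b * w i) \<in> pg_vecs n"
  by (simp add: pg_vecs_def)

lemma finite_card_pg_vecs:
  "finite (pg_vecs n :: (nat \<Rightarrow> 'a::{field,finite}) set) \<and>
   card (pg_vecs n :: (nat \<Rightarrow> 'a) set) \<le> card (UNIV :: 'a set) ^ Suc n"
proof -
  let ?E = "PiE {..n} (\<lambda>_. UNIV :: 'a set)"
  have inj: "inj_on (\<lambda>v. restrict v {..n}) (pg_vecs n :: (nat \<Rightarrow> 'a) set)"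
  proof (rule inj_onI)
    fix v w :: "nat \<Rightarrow> 'a"
    assume vw: "v \<in> pg_vecs n" "w \<in> pg_vecs n" and eq: "restrict v {..n} = restrict w {..n}"
    show "v = w"
    proof
      fix i show "v i = w i"
      proof (cases "i \<le> n")
        case True
        then show ?thesis using fun_cong[OF eq, of i] by simp
      next
        case False
        then show ?thesis using vw by (simp add: pg_vecs_def)
      qed
    qed
  qed
  have sub: "(\<lambda>v. restrict v {..n}) ` (pg_vecs n :: (nat \<Rightarrow> 'a) set) \<subseteq> ?E" by (auto split: if_splits)
  have "finite ?E" by (rule finite_PiE) auto
  moreover have "card ?E = card (UNIV :: 'a set) ^ Suc n" by (simp add: card_PiE)
  ultimately show ?thesis
    using finite_imageD[OF finite_subset[OF sub] inj] card_inj_on_le[OF inj sub] by auto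
qed

lemma lincomb_zero_multiple:
  fixes u w :: "nat \<Rightarrow> 'a::field"
  assumes "(\<lambda>i. a * u i + b * w i) = (\<lambda>_. 0)" and "a \<noteq> 0"
  shows "u = (\<lambda>i. (- b / a) * w i)"
proof
  fix i
  have "a * u i + b * w i = 0" using assms(1) by metis
  then have "a * u i = - (b * w i)" by (simp add: add_eq_0_iff)
  then show "u i = (- b / a) * w i" using assms(2) by (simp add: field_simps)
qed

lemma span1_independent:
  fixes u w :: "nat \<Rightarrow> 'a::field"
  assumes "u \<noteq> (\<lambda>_. 0)" "w \<noteq> (\<lambda>_. 0)" "pg_span1 u \<noteq> pg_span1 w"
    and zero: "(\<lambda>i. a * u i + b * w i) = (\<lambda>_. 0)"
  shows "a = 0 \<and> b = 0"
proof (rule ccontr)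
  have multiple: False if "x = (\<lambda>i. c * y i)" "x \<noteq> (\<lambda>_. 0)" "pg_span1 x \<noteq> pg_span1 y"
    for x y :: "nat \<Rightarrow> 'a" and c
    using that span1_scale[of c y] by (cases "c = 0") auto
  assume "\<not> (a = 0 \<and> b = 0)"
  moreover have zero': "(\<lambda>i. b * w i + a * u i) = (\<lambda>_. 0)"
    using zero by (simp add: add.commute)
  ultimately show False
    using multiple[OF lincomb_zero_multiple[OF zero]] multiple[OF lincomb_zero_multiple[OF zero']]
      assms(1-3) by metis
qed

lemma span1_sub_span2:
  "pg_span1 (\<lambda>i. a * u i + b * w i) \<subseteq> pg_span2 u (w :: nat \<Rightarrow> 'a::field)"
proof
  fix y assume "y \<in> pg_span1 (\<lambda>i. a * u i + b * w i)"
  then obtain d where "y = (\<lambda>i. d * (a * u i + b * w i))" unfolding span1_mem by blast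
  then have "y = (\<lambda>i. (d * a) * u i + (d * b) * w i)" by (simp add: algebra_simps)
  then show "y \<in> pg_span2 u w" unfolding pg_span2_def by blast
qed

lemma line_span2:
  assumes "u \<in> pg_vecs n" "w \<in> pg_vecs n" "u \<noteq> (\<lambda>_. 0)" "w \<noteq> (\<lambda>_. 0)"
    and "pg_span1 u \<noteq> pg_span1 w"
  shows "{P \<in> pg_points n. P \<subseteq> pg_span2 u w} \<in> pg_lines n"
  using assms unfolding pg_lines_def by blast

lemma point_on_span2:
  assumes "u \<in> pg_vecs n" "w \<in> pg_vecs n" "(\<lambda>i. a * u i + b * w i) \<noteq> (\<lambda>_. 0)"
  shows "pg_span1 (\<lambda>i. a * u i + b * w i) \<in> {P \<in> pg_points n. P \<subseteq> pg_span2 u w}"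
  using assms span1_point[OF pg_vecs_lincomb] span1_sub_span2 by blast

section \<open>Hyperplanes block every line\<close>

lemma form_lincomb:
  fixes c u w :: "nat \<Rightarrow> 'a::field"
  shows "(\<Sum>i\<le>n. c i * (a * u i + b * w i)) = a * (\<Sum>i\<le>n. c i * u i) + b * (\<Sum>i\<le>n. c i * w i)"
  by (simp add: sum.distrib sum_distrib_left algebra_simps)

text \<open>Every line through the points of u and w contains a point of the kernel of a
  linear form: if the form takes the values \<alpha>, \<beta> at u, w, then \<beta>u - \<alpha>w is a
  nonzero kernel vector on the line (u itself when \<alpha> = \<beta> = 0).\<close>
lemma line_meets_kernel:
  fixes c u w :: "nat \<Rightarrow> 'a::field"
  assumes "u \<in> pg_vecs n" "w \<in> pg_vecs n" "u \<noteq> (\<lambda>_. 0)" "w \<noteq> (\<lambda>_. 0)"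
    and "pg_span1 u \<noteq> pg_span1 w"
  shows "\<exists>x. x \<in> pg_vecs n \<and> x \<noteq> (\<lambda>_. 0) \<and> (\<Sum>i\<le>n. c i * x i) = 0 \<and>
             pg_span1 x \<in> {P \<in> pg_points n. P \<subseteq> pg_span2 u w}"
proof -
  define \<alpha> where "\<alpha> = (\<Sum>i\<le>n. c i * u i)"
  define \<beta> where "\<beta> = (\<Sum>i\<le>n. c i * w i)"
  obtain a b :: 'a where ab: "\<not> (a = 0 \<and> b = 0)" "a * \<alpha> + b * \<beta> = 0"
  proof (cases "\<alpha> = 0 \<and> \<beta> = 0")
    case True
    then show ?thesis using that[of 1 0] by simp
  next
    case False
    then show ?thesis using that[of \<beta> "- \<alpha>"] by (auto simp: mult.commute)
  qed
  define x where "x = (\<lambda>i. a * u i + b * w i)"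
  have "x \<noteq> (\<lambda>_. 0)"
    using span1_independent[OF assms(3-5)] ab(1) unfolding x_def by blast
  moreover have "(\<Sum>i\<le>n. c i * x i) = 0"
    using ab(2) unfolding x_def form_lincomb \<alpha>_def \<beta>_def .
  ultimately show ?thesis
    using pg_vecs_lincomb[OF assms(1,2)] point_on_span2[OF assms(1,2)] unfolding x_def by blast
qed

text \<open>The points in the kernel of any linear form block all lines.  (For the zero
  form this is the set of all points.)\<close>
lemma kernel_blocking:
  fixes c :: "nat \<Rightarrow> 'a::field"
  shows "blocking_set n {P \<in> pg_points n. P \<subseteq> {v. (\<Sum>i\<le>n. c i * v i) = 0}}"
  unfolding blocking_set_def
proof (intro conjI ballI)
  fix L :: "(nat \<Rightarrow> 'a) set set"
  assume "L \<in> pg_lines n"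
  then obtain u w where L: "L = {P \<in> pg_points n. P \<subseteq> pg_span2 u w}"
    and uw: "u \<in> pg_vecs n" "w \<in> pg_vecs n" "u \<noteq> (\<lambda>_. 0)" "w \<noteq> (\<lambda>_. 0)"
        "pg_span1 u \<noteq> pg_span1 w"
    unfolding pg_lines_def by blast
  obtain x where x: "x \<in> pg_vecs n" "x \<noteq> (\<lambda>_. 0)" "(\<Sum>i\<le>n. c i * x i) = 0"
    and xL: "pg_span1 x \<in> L"
    using line_meets_kernel[OF uw, of c] unfolding L by blast
  have "pg_span1 x \<subseteq> {v. (\<Sum>i\<le>n. c i * v i) = 0}"
    using x(3) by (auto simp: span1_mem mult.left_commute simp flip: sum_distrib_left)
  then show "L \<inter> {P \<in> pg_points n. P \<subseteq> {v. (\<Sum>i\<le>n. c i * v i) = 0}} \<noteq> {}"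
    using xL span1_point[OF x(1,2)] by blast
qed auto

section \<open>Subspaces of large size\<close>

definition pg_subspace :: "nat \<Rightarrow> (nat \<Rightarrow> 'a::field) set \<Rightarrow> bool" where
  "pg_subspace n W \<longleftrightarrow> W \<subseteq> pg_vecs n \<and> (\<lambda>_. 0) \<in> W \<and>
     (\<forall>u\<in>W. \<forall>v\<in>W. \<forall>a b. (\<lambda>i. a * u i + b * v i) \<in> W)"

lemma subspace_lincomb:
  "pg_subspace n W \<Longrightarrow> u \<in> W \<Longrightarrow> v \<in> W \<Longrightarrow> (\<lambda>i. a * u i + b * v i) \<in> W"
  unfolding pg_subspace_def by blast

lemma subspace_scale:
  assumes "pg_subspace n W" "u \<in> W"
  shows "(\<lambda>i. c * u i) \<in> W"
  using subspace_lincomb[OF assms assms(2), of c 0] by simp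

lemma subspace_sum:
  fixes f :: "'b \<Rightarrow> nat \<Rightarrow> 'a::field"
  assumes W: "pg_subspace n W" and "finite I" and "\<forall>i\<in>I. f i \<in> W"
  shows "(\<lambda>j. \<Sum>i\<in>I. f i j) \<in> W"
  using assms(2,3)
proof (induction I rule: finite_induct)
  case empty
  then show ?case using W by (simp add: pg_subspace_def)
next
  case (insert x F)
  then have "(\<lambda>j. 1 * f x j + 1 * (\<Sum>i\<in>F. f i j)) \<in> W"
    by (intro subspace_lincomb[OF W]) auto
  then show ?case using insert by simp
qed

lemma independent_mod_subspace:
  assumes W: "pg_subspace n W" and z: "z \<notin> W"
    and a: "\<nexists>l. (\<lambda>i. a i - l * z i) \<in> W"
    and st: "(\<lambda>i. s * a i + t * z i) \<in> W"
  shows "s = 0 \<and> t = 0"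
proof (cases "s = 0")
  case False
  have "(\<lambda>i. a i - (- t / s) * z i) = (\<lambda>i. (1 / s) * (s * a i + t * z i))"
    using False by (simp add: fun_eq_iff field_simps)
  then show ?thesis using subspace_scale[OF W st, of "1 / s"] a by metis
next
  case True
  then have "t \<noteq> 0 \<Longrightarrow> z = (\<lambda>i. (1 / t) * (s * a i + t * z i))" by auto
  then show ?thesis using subspace_scale[OF W st, of "1 / t"] z True by metis
qed

text \<open>Counting argument: if a subspace W has more than q^(n-1) vectors and z is a
  vector outside W, then every vector lies in W + span z.  Otherwise the map
  (s, t, w) \<mapsto> sa + tz + w would embed F \<times> F \<times> W into F^(n+1).\<close>
lemma large_subspace_absorbs:
  fixes W :: "(nat \<Rightarrow> 'a::{field,finite}) set"
  assumes W: "pg_subspace n W" and "n \<ge> 1"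
    and large: "card (UNIV :: 'a set) ^ (n - 1) < card W"
    and a: "a \<in> pg_vecs n" and z: "z \<in> pg_vecs n" "z \<notin> W"
  shows "\<exists>l. (\<lambda>i. a i - l * z i) \<in> W"
proof (rule ccontr)
  assume none: "\<nexists>l. (\<lambda>i. a i - l * z i) \<in> W"
  define D where "D = (UNIV :: 'a set) \<times> (UNIV :: 'a set) \<times> W"
  define \<phi> where "\<phi> = (\<lambda>(s :: 'a, t :: 'a, w :: nat \<Rightarrow> 'a) i. s * a i + t * z i + w i)"
  have inj: "inj_on \<phi> D"
  proof (rule inj_onI)
    fix x y assume "x \<in> D" "y \<in> D" and eq_xy: "\<phi> x = \<phi> y"
    then obtain s t w s' t' w' where xy: "x = (s, t, w)" "y = (s', t', w')"
      and w: "w \<in> W" "w' \<in> W" by (auto simp: D_def)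
    note eq = eq_xy[unfolded xy]
    have "(\<lambda>i. (s - s') * a i + (t - t') * z i) = (\<lambda>i. 1 * w' i + (- 1) * w i)"
      using eq by (simp add: \<phi>_def fun_eq_iff algebra_simps)
    then have "(\<lambda>i. (s - s') * a i + (t - t') * z i) \<in> W"
      using subspace_lincomb[OF W w(2,1)] by metis
    then have "s = s' \<and> t = t'"
      using independent_mod_subspace[OF W z(2) none] by fastforce
    with eq show "x = y" unfolding xy by (simp add: \<phi>_def fun_eq_iff)
  qed
  have into: "\<phi> ` D \<subseteq> pg_vecs n"
  proof clarify
    fix s t w assume "(s, t, w) \<in> D"
    then have "w \<in> pg_vecs n" using W by (auto simp: D_def pg_subspace_def)
    then show "\<phi> (s, t, w) \<in> pg_vecs n" using a z(1) by (simp add: \<phi>_def pg_vecs_def)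
  qed
  have "card D \<le> card (pg_vecs n :: (nat \<Rightarrow> 'a) set)"
    using card_inj_on_le[OF inj into] finite_card_pg_vecs by blast
  also have "\<dots> \<le> card (UNIV :: 'a set) ^ Suc n"
    using finite_card_pg_vecs by blast
  also have "\<dots> = card (UNIV :: 'a set) * (card (UNIV :: 'a set) * card (UNIV :: 'a set) ^ (n - 1))"
    using \<open>n \<ge> 1\<close> by (cases n) auto
  also have "\<dots> < card D"
    using large by (simp add: D_def card_cartesian_product finite_UNIV_card_ge_0)
  finally show False by simp
qed

lemma unit_expansion:
  fixes v :: "nat \<Rightarrow> 'a::field"
  assumes "v \<in> pg_vecs n"
  shows "(\<Sum>i\<le>n. v i * (if j = i then 1 else 0)) = v j"
proof -
  have "(\<Sum>i\<le>n. v i * (if j = i then 1 else 0)) = (\<Sum>i\<le>n. if j = i then v j else 0)"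
    by (rule sum.cong) auto
  also have "\<dots> = v j"
    using assms by (auto simp: sum.delta' pg_vecs_def)
  finally show ?thesis .
qed

text \<open>A subspace W with every vector in W + span z, z \<notin> W, contains the kernel of a
  nonzero linear form: writing e_i - \<lambda>_i z \<in> W for the unit vectors, the form is
  v \<mapsto> \<Sum> \<lambda>_i v_i, since v - (\<Sum> \<lambda>_i v_i) z = \<Sum> v_i (e_i - \<lambda>_i z) \<in> W.\<close>
lemma subspace_codim_one:
  fixes W :: "(nat \<Rightarrow> 'a::field) set"
  assumes W: "pg_subspace n W" and z: "z \<in> pg_vecs n" "z \<notin> W"
    and absorbs: "\<forall>a\<in>pg_vecs n. \<exists>l. (\<lambda>i. a i - l * z i) \<in> W"
  shows "\<exists>c. (\<exists>i\<le>n. c i \<noteq> 0) \<and> (\<forall>v\<in>pg_vecs n. (\<Sum>i\<le>n. c i * v i) = 0 \<longrightarrow> v \<in> W)"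
proof -
  define e where "e i = (\<lambda>j. if j = i then (1 :: 'a) else 0)" for i :: nat
  define lam where "lam i = (SOME l. (\<lambda>j. e i j - l * z j) \<in> W)" for i
  have lam: "(\<lambda>j. e i j - lam i * z j) \<in> W" if "i \<le> n" for i
  proof -
    have "e i \<in> pg_vecs n" using that by (auto simp: e_def pg_vecs_def)
    then have "\<exists>l. (\<lambda>j. e i j - l * z j) \<in> W" using absorbs by blast
    then show ?thesis unfolding lam_def by (rule someI_ex)
  qed
  have residual: "(\<lambda>j. v j - (\<Sum>i\<le>n. lam i * v i) * z j) \<in> W" if v: "v \<in> pg_vecs n" for v
  proof -
    have "(\<lambda>j. \<Sum>i\<le>n. v i * (e i j - lam i * z j)) \<in> W"
      using lam subspace_scale[OF W] by (intro subspace_sum[OF W]) auto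
    moreover have "(\<Sum>i\<le>n. v i * (e i j - lam i * z j)) = v j - (\<Sum>i\<le>n. lam i * v i) * z j" for j
    proof -
      have "(\<Sum>i\<le>n. v i * (e i j - lam i * z j))
          = (\<Sum>i\<le>n. v i * e i j) - (\<Sum>i\<le>n. lam i * v i) * z j"
        by (simp add: right_diff_distrib sum_subtractf sum_distrib_right mult.assoc mult.left_commute)
      then show ?thesis using unit_expansion[OF v] by (simp add: e_def)
    qed
    ultimately show ?thesis by simp
  qed
  have "\<exists>i\<le>n. lam i \<noteq> 0"
  proof (rule ccontr)
    assume "\<not> (\<exists>i\<le>n. lam i \<noteq> 0)"
    then have "(\<Sum>i\<le>n. lam i * z i) = 0" by simp
    then show False using residual[OF z(1)] z(2) by simp
  qed
  moreover have "v \<in> W" if "v \<in> pg_vecs n" "(\<Sum>i\<le>n. lam i * v i) = 0" for v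
    using residual[OF that(1)] that(2) by simp
  ultimately show ?thesis by blast
qed

lemma large_subspace_contains_kernel:
  fixes W :: "(nat \<Rightarrow> 'a::{field,finite}) set"
  assumes W: "pg_subspace n W" and "n \<ge> 1"
    and large: "card (UNIV :: 'a set) ^ (n - 1) < card W"
  shows "\<exists>c. (\<exists>i\<le>n. c i \<noteq> 0) \<and> (\<forall>v\<in>pg_vecs n. (\<Sum>i\<le>n. c i * v i) = 0 \<longrightarrow> v \<in> W)"
proof (cases "pg_vecs n \<subseteq> W")
  case True
  then show ?thesis by (intro exI[of _ "\<lambda>i. if i = 0 then 1 else 0"]) auto
next
  case False
  then obtain z where "z \<in> pg_vecs n" "z \<notin> W" by blast
  with large_subspace_absorbs[OF assms] show ?thesis
    by (intro subspace_codim_one[OF W]) auto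
qed

section \<open>The vertex subspace of a point set\<close>

definition pg_cone :: "nat \<Rightarrow> (nat \<Rightarrow> 'a::field) set set \<Rightarrow> (nat \<Rightarrow> 'a) set" where
  "pg_cone n B = {v \<in> pg_vecs n. v = (\<lambda>_. 0) \<or> pg_span1 v \<in> B}"

text \<open>Vectors u of the cone all of whose combinations with cone vectors stay in the
  cone: u = 0, or u spans a point of B such that every line joining it to another
  point of B lies in B.\<close>
definition pg_vertex_space :: "nat \<Rightarrow> (nat \<Rightarrow> 'a::field) set set \<Rightarrow> (nat \<Rightarrow> 'a) set" where
  "pg_vertex_space n B =
     {u \<in> pg_cone n B. \<forall>w\<in>pg_cone n B. \<forall>a b. (\<lambda>i. a * u i + b * w i) \<in> pg_cone n B}"

lemma cone_scale:
  assumes "v \<in> pg_cone n B"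
  shows "(\<lambda>i. c * v i) \<in> pg_cone n B"
proof (cases "c = 0 \<or> v = (\<lambda>_. 0)")
  case True
  then show ?thesis by (auto simp: pg_cone_def pg_vecs_def)
next
  case False
  then show ?thesis using assms by (auto simp: pg_cone_def pg_vecs_def span1_scale)
qed

lemma vertex_space_cone: "pg_vertex_space n B \<subseteq> pg_cone n B"
  unfolding pg_vertex_space_def by blast

text \<open>The vertex vectors form a subspace: combining twice shows that combinations of
  two vertex vectors are again vertex vectors.\<close>
lemma vertex_space_subspace: "pg_subspace n (pg_vertex_space n B)"
  unfolding pg_subspace_def
proof (intro conjI ballI allI)
  show "pg_vertex_space n B \<subseteq> pg_vecs n"
    by (auto simp: pg_vertex_space_def pg_cone_def)
  have "(\<lambda>i. a * 0 + b * w i) \<in> pg_cone n B" if "w \<in> pg_cone n B" for w a b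
    using cone_scale[OF that] by simp
  then show "(\<lambda>_. 0) \<in> pg_vertex_space n B"
    by (auto simp: pg_vertex_space_def pg_cone_def pg_vecs_def)
next
  fix u v a b assume u: "u \<in> pg_vertex_space n B" and v: "v \<in> pg_vertex_space n B"
  have combine: "(\<lambda>i. c * u i + d * w i) \<in> pg_cone n B" if "w \<in> pg_cone n B" for w c d
    using u that unfolding pg_vertex_space_def by blast
  have "(\<lambda>i. c * (a * u i + b * v i) + d * w i) \<in> pg_cone n B"
    if "w \<in> pg_cone n B" for w c d
  proof -
    have "(\<lambda>i. (c * a) * u i + 1 * ((c * b) * v i + d * w i)) \<in> pg_cone n B"
      using combine v that unfolding pg_vertex_space_def by blast
    moreover have "(\<lambda>i. (c * a) * u i + 1 * ((c * b) * v i + d * w i))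
        = (\<lambda>i. c * (a * u i + b * v i) + d * w i)"
      by (simp add: fun_eq_iff algebra_simps)
    ultimately show ?thesis by simp
  qed
  moreover have "(\<lambda>i. a * u i + b * v i) \<in> pg_cone n B"
  proof -
    have "(\<lambda>i. b * v i) \<in> pg_cone n B" using cone_scale v vertex_space_cone by blast
    then show ?thesis using combine[of "\<lambda>i. b * v i" a 1] by simp
  qed
  ultimately show "(\<lambda>i. a * u i + b * v i) \<in> pg_vertex_space n B"
    unfolding pg_vertex_space_def by blast
qed

lemma vertex_point:
  assumes B: "B \<subseteq> pg_points n" and r: "r \<in> B"
    and lines: "\<forall>L\<in>pg_lines n. r \<in> L \<longrightarrow> L \<inter> B = {r} \<or> L \<subseteq> B"
  shows "r \<subseteq> pg_vertex_space n B"
proof -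
  obtain u where u: "u \<in> pg_vecs n" "u \<noteq> (\<lambda>_. 0)" "r = pg_span1 u"
    using r B unfolding pg_points_def by auto
  have u_cone: "u \<in> pg_cone n B" using u r unfolding pg_cone_def by auto
  have "(\<lambda>i. a * u i + b * w i) \<in> pg_cone n B" if w: "w \<in> pg_cone n B" for w a b
  proof (cases "w = (\<lambda>_. 0) \<or> pg_span1 w = pg_span1 u")
    case True
    then have "w \<in> pg_span1 u" using span1_self[of w] span1_zero[of u] by auto
    then obtain c where "w = (\<lambda>i. c * u i)" unfolding span1_mem by blast
    then have "(\<lambda>i. a * u i + b * w i) = (\<lambda>i. (a + b * c) * u i)"
      by (simp add: fun_eq_iff algebra_simps)
    then show ?thesis using cone_scale[OF u_cone] by simp
  next
    case False
    define L where "L = {P \<in> pg_points n. P \<subseteq> pg_span2 u w}"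
    have w': "w \<in> pg_vecs n" "pg_span1 w \<in> B" using w False by (auto simp: pg_cone_def)
    have L: "L \<in> pg_lines n"
      unfolding L_def using line_span2[OF u(1) w'(1) u(2)] False by blast
    have "r \<in> L" "pg_span1 w \<in> L"
      using point_on_span2[OF u(1) w'(1), of 1 0] point_on_span2[OF u(1) w'(1), of 0 1]
        u False unfolding L_def by auto
    moreover have "pg_span1 w \<noteq> r" using False u(3) by auto
    ultimately have "L \<subseteq> B" using lines L w'(2) by blast
    show ?thesis
    proof (cases "(\<lambda>i. a * u i + b * w i) = (\<lambda>_. 0)")
      case False
      then have "pg_span1 (\<lambda>i. a * u i + b * w i) \<in> B"
        using point_on_span2[OF u(1) w'(1)] \<open>L \<subseteq> B\<close> unfolding L_def by blast
      then show ?thesis using pg_vecs_lincomb[OF u(1) w'(1)] unfolding pg_cone_def by blast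
    qed (use pg_vecs_lincomb[OF u(1) w'(1)] in \<open>simp add: pg_cone_def pg_vecs_def\<close>)
  qed
  then have "u \<in> pg_vertex_space n B"
    using u_cone unfolding pg_vertex_space_def by blast
  then show ?thesis
    using subspace_scale[OF vertex_space_subspace] u(3) by (auto simp: span1_mem)
qed

text \<open>Distinct points share only the zero vector, so a subspace containing the
  points of R has at least |R|(q - 1) + 1 vectors.\<close>
lemma card_subspace_points:
  fixes W :: "(nat \<Rightarrow> 'a::{field,finite}) set"
  assumes W: "pg_subspace n W" and R: "R \<subseteq> pg_points n" "\<forall>r\<in>R. r \<subseteq> W"
  shows "card R * (card (UNIV :: 'a set) - 1) + 1 \<le> card W"
proof -
  define Z :: "nat \<Rightarrow> 'a" where "Z = (\<lambda>_. 0)"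
  have finW: "finite W" and Z: "Z \<in> W"
    using W finite_card_pg_vecs finite_subset unfolding pg_subspace_def Z_def by blast+
  have "R \<subseteq> Pow W" using R by blast
  then have finR: "finite R" using finW by (meson finite_Pow_iff finite_subset)
  have point: "card (r - {Z}) = card (UNIV :: 'a set) - 1" "Z \<in> r" "finite r"
    if r: "r \<in> R" for r
  proof -
    obtain u where "u \<noteq> Z" "r = pg_span1 u" using R(1) r unfolding pg_points_def Z_def by blast
    then show "Z \<in> r" "card (r - {Z}) = card (UNIV :: 'a set) - 1" "finite r"
      using card_span1[of u] span1_zero[of u] by (auto simp: Z_def)
  qed
  have disjoint: "(r - {Z}) \<inter> (s - {Z}) = {}" if rs: "r \<in> R" "s \<in> R" "r \<noteq> s" for r s
  proof -
    obtain u v where "r = pg_span1 u" "s = pg_span1 v" using R(1) rs unfolding pg_points_def by blast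
    then show ?thesis using rs(3) span1_eq unfolding Z_def by blast
  qed
  have "card R * (card (UNIV :: 'a set) - 1) = (\<Sum>r\<in>R. card (r - {Z}))"
    using point by simp
  also have "\<dots> = card (\<Union>r\<in>R. r - {Z})"
    using finR point(3) disjoint by (intro card_UN_disjoint[symmetric]) auto
  also have "\<dots> \<le> card (W - {Z})"
    using R(2) finW by (intro card_mono) blast+
  also have "\<dots> = card W - 1" using Z finW by simp
  finally have "card R * (card (UNIV :: 'a set) - 1) \<le> card W - 1" .
  moreover have "card W \<noteq> 0" using Z finW by auto
  ultimately show ?thesis by linarith
qed

lemma count_exceeds:
  fixes p q N :: nat
  assumes "p \<ge> 2" "N \<ge> 1" "q \<ge> 3"
  shows "p ^ N < (p ^ N - p ^ (N - 1) + 1) * (q - 1) + 1"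
proof -
  define M where "M = p ^ (N - 1)"
  have pM: "p ^ N = p * M"
    unfolding M_def using assms(2) by (cases N) auto
  then have diff: "p ^ N - M = (p - 1) * M"
    by (simp add: diff_mult_distrib)
  have "p ^ N = p * M" by (rule pM)
  also have "\<dots> \<le> (2 * (p - 1)) * M"
    using assms(1) by (intro mult_le_mono1) linarith
  also have "\<dots> < 2 * (p ^ N - M + 1)"
    unfolding diff by simp
  also have "\<dots> \<le> (p ^ N - M + 1) * (q - 1)"
    using assms(3) by (subst mult.commute) (intro mult_le_mono2, linarith)
  finally show ?thesis unfolding M_def by simp
qed

text \<open>The same bound in the parameters of the theorem: q = p^h > 2 and
  N = h(n - 1), so that q^(n-1) = p^N.\<close>
lemma count_exceeds_params:
  fixes p h n N :: nat
  assumes "n \<ge> 2" "prime p" "p ^ h > 2" "N = h * (n - 1)"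
  shows "(p ^ h) ^ (n - 1) < (p ^ N - p ^ (N - 1) + 1) * (p ^ h - 1) + 1"
proof -
  have "h \<noteq> 0" using assms(3) by (intro notI) simp
  then have "N \<ge> 1" using assms(1,4) by simp
  moreover have "(p ^ h) ^ (n - 1) = p ^ N" by (simp add: assms(4) power_mult)
  ultimately show ?thesis
    using assms(3) prime_ge_2_nat[OF assms(2)] count_exceeds by simp
qed

lemma kernel_points_in_cone:
  assumes "\<forall>v\<in>pg_vecs n. (\<Sum>i\<le>n. c i * v i) = 0 \<longrightarrow> v \<in> pg_cone n B"
  shows "{P \<in> pg_points n. P \<subseteq> {v. (\<Sum>i\<le>n. c i * v i) = 0}} \<subseteq> B"
proof clarify
  fix P assume P: "P \<in> pg_points n" "P \<subseteq> {v. (\<Sum>i\<le>n. c i * v i) = 0}"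
  then obtain u where u: "u \<in> pg_vecs n" "u \<noteq> (\<lambda>_. 0)" "P = pg_span1 u"
    unfolding pg_points_def by blast
  then have "u \<in> pg_cone n B" using P(2) span1_self[of u] assms by blast
  then show "P \<in> B" using u unfolding pg_cone_def by simp
qed

lemma minimal_blocking_hyperplane:
  assumes B: "minimal_blocking_set n B" and c: "\<exists>i\<le>n. c i \<noteq> 0"
    and kernel: "\<forall>v\<in>pg_vecs n. (\<Sum>i\<le>n. c i * v i) = 0 \<longrightarrow> v \<in> pg_cone n B"
  shows "B \<in> pg_hyperplanes n"
proof -
  define H where "H = {P \<in> pg_points n. P \<subseteq> {v. (\<Sum>i\<le>n. c i * v i) = 0}}"
  have "H \<subseteq> B" unfolding H_def using kernel by (rule kernel_points_in_cone)
  moreover have "blocking_set n H" unfolding H_def by (rule kernel_blocking)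
  ultimately have "H = B" using B unfolding minimal_blocking_set_def by blast
  moreover have "H \<in> pg_hyperplanes n" unfolding H_def pg_hyperplanes_def using c by blast
  ultimately show ?thesis by simp
qed

theorem lemmaN2:
  fixes B :: "(nat \<Rightarrow> 'a::{field,finite}) set set"
    and n p h N :: nat
  assumes "n \<ge> 2"
    and "prime p" and "card (UNIV :: 'a set) = p ^ h" and "p ^ h > 2"
    and "N = h * (n - 1)"
    and "minimal_blocking_set n B"
    and "\<exists>R \<subseteq> B. card R = p ^ N - p ^ (N - 1) + 1 \<and>
           (\<forall>r \<in> R. \<forall>L \<in> pg_lines n. r \<in> L \<longrightarrow> L \<inter> B = {r} \<or> L \<subseteq> B)"
  shows "B \<in> pg_hyperplanes n"
proof -
  obtain R where R: "R \<subseteq> B" "card R = p ^ N - p ^ (N - 1) + 1"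
    and R_lines: "\<forall>r \<in> R. \<forall>L \<in> pg_lines n. r \<in> L \<longrightarrow> L \<inter> B = {r} \<or> L \<subseteq> B"
    using assms(7) by blast
  have B: "B \<subseteq> pg_points n"
    using assms(6) unfolding minimal_blocking_set_def blocking_set_def by blast
  let ?W = "pg_vertex_space n B"
  \<comment> \<open>the points R_i lie in the vertex subspace, which is therefore large\<close>
  have "\<forall>r\<in>R. r \<subseteq> ?W" using vertex_point[OF B] R(1) R_lines by blast
  then have "card R * (p ^ h - 1) + 1 \<le> card ?W"
    using card_subspace_points[OF vertex_space_subspace] R(1) B assms(3) by fastforce
  then have large: "card (UNIV :: 'a set) ^ (n - 1) < card ?W"
    using count_exceeds_params[OF assms(1,2,4,5)] R(2) assms(3) by simp
  \<comment> \<open>so it contains a hyperplane, which by minimality is all of B\<close>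
  obtain c where "\<exists>i\<le>n. c i \<noteq> 0"
    and "\<forall>v\<in>pg_vecs n. (\<Sum>i\<le>n. c i * v i) = 0 \<longrightarrow> v \<in> ?W"
    using large_subspace_contains_kernel[OF vertex_space_subspace _ large] assms(1) by auto
  then show ?thesis
    using minimal_blocking_hyperplane[OF assms(6)] vertex_space_cone by blast
qed

end
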